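(* Let $G$ be a graph with a type-2A 1-planar drawing $D$, let $S$ be a vertex-cut of $G$, let $F$ be a component of $G-S$, and let $ab$ be an edge of $F$. If $ab$ is crossed by an edge $xy$ in $D$, then one of the following holds: (a) $x,y\in S$; (b) $x,y\in V(F)$; (c) one of $x,y$ lies in $S$ and the other lies in $V(F)$.
   Context: All drawings are good (no edge crosses itself, two edges cross at most once, adjacent edges do not cross). A drawing is 1-planar if every edge is crossed at most once. If edges $ab$ and $cd$ cross in a 1-planar drawing of $G$, the associated edges of this crossing are the edges of $G[\{a,b,c,d\}]$ other than $ab$ and $cd$. A 1-planar drawing is type-2A if every crossing has at least two associated edges, and every crossing with exactly two associated edges has these two edges disjoint. A vertex-cut is a set $S\subseteq V(G)$ with $G-S$ disconnected. *)

theory Defs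
  imports "HOL-Analysis.Analysis"
begin

definition graph :: "'v set \<Rightarrow> 'v set set \<Rightarrow> bool" where
  "graph V E \<longleftrightarrow> finite V \<and>
     (\<forall>e\<in>E. \<exists>u v. u \<noteq> v \<and> u \<in> V \<and> v \<in> V \<and> e = {u, v})"

definition drawing :: "'v set \<Rightarrow> 'v set set \<Rightarrow> ('v \<Rightarrow> complex) \<Rightarrow> ('v set \<Rightarrow> real \<Rightarrow> complex) \<Rightarrow> bool" where
  "drawing V E pos \<Gamma> \<longleftrightarrow> inj_on pos V \<and>
     (\<forall>e\<in>E. arc (\<Gamma> e) \<and> pos ` e = {pathstart (\<Gamma> e), pathfinish (\<Gamma> e)} \<and>
        (\<forall>w\<in>V. pos w \<in> path_image (\<Gamma> e) \<longrightarrow> w \<in> e))"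

definition edge_interior :: "('v set \<Rightarrow> real \<Rightarrow> complex) \<Rightarrow> 'v set \<Rightarrow> complex set" where
  "edge_interior \<Gamma> e = path_image (\<Gamma> e) - {pathstart (\<Gamma> e), pathfinish (\<Gamma> e)}"

definition crossing_points :: "('v set \<Rightarrow> real \<Rightarrow> complex) \<Rightarrow> 'v set \<Rightarrow> 'v set \<Rightarrow> complex set" where
  "crossing_points \<Gamma> e f = edge_interior \<Gamma> e \<inter> edge_interior \<Gamma> f"

definition crosses :: "('v set \<Rightarrow> real \<Rightarrow> complex) \<Rightarrow> 'v set \<Rightarrow> 'v set \<Rightarrow> bool" where
  "crosses \<Gamma> e f \<longleftrightarrow> e \<noteq> f \<and> crossing_points \<Gamma> e f \<noteq> {}"

text \<open>Good drawing: no self-crossings (automatic for arcs), two edges cross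
  at most once, adjacent edges do not cross.\<close>
definition good_drawing :: "'v set \<Rightarrow> 'v set set \<Rightarrow> ('v \<Rightarrow> complex) \<Rightarrow> ('v set \<Rightarrow> real \<Rightarrow> complex) \<Rightarrow> bool" where
  "good_drawing V E pos \<Gamma> \<longleftrightarrow> drawing V E pos \<Gamma> \<and>
     (\<forall>e\<in>E. \<forall>f\<in>E. e \<noteq> f \<longrightarrow> finite (crossing_points \<Gamma> e f) \<and> card (crossing_points \<Gamma> e f) \<le> 1) \<and>
     (\<forall>e\<in>E. \<forall>f\<in>E. e \<noteq> f \<longrightarrow> e \<inter> f \<noteq> {} \<longrightarrow> \<not> crosses \<Gamma> e f)"

definition one_planar_drawing :: "'v set \<Rightarrow> 'v set set \<Rightarrow> ('v \<Rightarrow> complex) \<Rightarrow> ('v set \<Rightarrow> real \<Rightarrow> complex) \<Rightarrow> bool" where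
  "one_planar_drawing V E pos \<Gamma> \<longleftrightarrow> good_drawing V E pos \<Gamma> \<and>
     (\<forall>e\<in>E. card {f\<in>E. crosses \<Gamma> e f} \<le> 1)"

definition associated_edges :: "'v set set \<Rightarrow> 'v set \<Rightarrow> 'v set \<Rightarrow> 'v set set" where
  "associated_edges E e f = {g\<in>E. g \<subseteq> e \<union> f} - {e, f}"

definition type_2A :: "'v set \<Rightarrow> 'v set set \<Rightarrow> ('v \<Rightarrow> complex) \<Rightarrow> ('v set \<Rightarrow> real \<Rightarrow> complex) \<Rightarrow> bool" where
  "type_2A V E pos \<Gamma> \<longleftrightarrow> one_planar_drawing V E pos \<Gamma> \<and>
     (\<forall>e\<in>E. \<forall>f\<in>E. crosses \<Gamma> e f \<longrightarrow>
        card (associated_edges E e f) \<ge> 2 \<and>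
        (card (associated_edges E e f) = 2 \<longrightarrow>
          (\<forall>g\<in>associated_edges E e f. \<forall>h\<in>associated_edges E e f. g \<noteq> h \<longrightarrow> g \<inter> h = {})))"

definition reach_minus :: "'v set \<Rightarrow> 'v set set \<Rightarrow> 'v set \<Rightarrow> 'v \<Rightarrow> 'v \<Rightarrow> bool" where
  "reach_minus V E S = (\<lambda>u v. u \<in> V - S \<and> v \<in> V - S \<and> {u, v} \<in> E)\<^sup>*\<^sup>*"

definition vertex_cut :: "'v set \<Rightarrow> 'v set set \<Rightarrow> 'v set \<Rightarrow> bool" where
  "vertex_cut V E S \<longleftrightarrow> S \<subseteq> V \<and>
     (\<exists>u\<in>V - S. \<exists>v\<in>V - S. \<not> reach_minus V E S u v)"

definition component_minus :: "'v set \<Rightarrow> 'v set set \<Rightarrow> 'v set \<Rightarrow> 'v set \<Rightarrow> bool" where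
  "component_minus V E S F \<longleftrightarrow> (\<exists>v\<in>V - S. F = {w. reach_minus V E S v w})"

end

theory Submission
  imports Defs
begin

text \<open>If an end vertex x of the crossing edge xy lay outside both S and F, then x would be
  adjacent to neither a nor b, since otherwise x would belong to the component F. The only
  possible associated edges of the crossing would then be ay and by; type 2A demands at least
  two of them, but then there are exactly two and they share y, which type 2A forbids.\<close>

lemma reach_minus_mem:
  assumes "reach_minus V E S u w" and "u \<in> V - S"
  shows "w \<in> V - S"
  using assms unfolding reach_minus_def
  by (induction rule: rtranclp_induct) auto

lemma component_minus_subset:
  assumes "component_minus V E S F"
  shows "F \<subseteq> V - S"
proof
  fix w
  assume "w \<in> F"
  obtain v where "v \<in> V - S" and F_eq: "F = {w. reach_minus V E S v w}"
    using assms unfolding component_minus_def by blast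
  from \<open>w \<in> F\<close> have "reach_minus V E S v w"
    unfolding F_eq by simp
  then show "w \<in> V - S"
    using \<open>v \<in> V - S\<close> by (rule reach_minus_mem)
qed

lemma component_minus_closed:
  assumes F: "component_minus V E S F"
    and "u \<in> F" and "w \<in> V - S" and "{u, w} \<in> E"
  shows "w \<in> F"
proof -
  obtain v where F_eq: "F = {w. reach_minus V E S v w}"
    using F unfolding component_minus_def by blast
  have "reach_minus V E S v u"
    using F_eq \<open>u \<in> F\<close> by blast
  moreover have "u \<in> V - S"
    using component_minus_subset[OF F] \<open>u \<in> F\<close> by blast
  with assms(3,4) have "(\<lambda>u w. u \<in> V - S \<and> w \<in> V - S \<and> {u, w} \<in> E) u w"
    by blast
  ultimately have "reach_minus V E S v w"
    unfolding reach_minus_def by (rule rtranclp.rtrancl_into_rtrancl)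
  then show ?thesis
    using F_eq by blast
qed

lemma type_2A_associated_edges_pair_disjoint:
  assumes D: "type_2A V E pos \<Gamma>" and "e \<in> E" and "f \<in> E" and "crosses \<Gamma> e f"
    and sub: "associated_edges E e f \<subseteq> {g, h}"
  shows "g \<inter> h = {}"
proof -
  let ?A = "associated_edges E e f"
  have "\<forall>e\<in>E. \<forall>f\<in>E. crosses \<Gamma> e f \<longrightarrow> card (associated_edges E e f) \<ge> 2 \<and>
      (card (associated_edges E e f) = 2 \<longrightarrow> (\<forall>g\<in>associated_edges E e f.
        \<forall>h\<in>associated_edges E e f. g \<noteq> h \<longrightarrow> g \<inter> h = {}))"
    using D unfolding type_2A_def by (rule conjunct2)
  note type_2A_crossing = this[rule_format, OF assms(2-4)]
  have "card {g, h} \<le> 2"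
    by (simp add: card_insert_le_m1)
  then have A_eq: "?A = {g, h}" and card_A: "card ?A = 2"
    using type_2A_crossing card_mono[OF _ sub] card_subset_eq[OF _ sub] by auto
  then have "g \<noteq> h"
    by auto
  then show ?thesis
    using type_2A_crossing card_A unfolding A_eq by blast
qed

lemma associated_edges_subset:
  assumes "graph V E" and "{a, x} \<notin> E" and "{b, x} \<notin> E"
  shows "associated_edges E {a, b} {x, y} \<subseteq> {{a, y}, {b, y}}"
proof
  fix h
  assume "h \<in> associated_edges E {a, b} {x, y}"
  then have "h \<in> E" and "h \<subseteq> {a, b, x, y}" and "h \<noteq> {a, b}" and "h \<noteq> {x, y}"
    unfolding associated_edges_def by auto
  moreover obtain u w where "u \<noteq> w" and "h = {u, w}"
    using assms(1) \<open>h \<in> E\<close> unfolding graph_def by blast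
  ultimately show "h \<in> {{a, y}, {b, y}}"
    using assms(2,3) by (auto simp: insert_commute)
qed

lemma crossing_edge_end_in_cut_or_component:
  assumes G: "graph V E" and D: "type_2A V E pos \<Gamma>" and F: "component_minus V E S F"
    and "a \<in> F" and "b \<in> F" and ab: "{a, b} \<in> E"
    and xy: "{x, y} \<in> E" and cr: "crosses \<Gamma> {a, b} {x, y}"
  shows "x \<in> S \<or> x \<in> F"
proof (rule ccontr)
  assume "\<not> (x \<in> S \<or> x \<in> F)"
  moreover have "x \<in> V"
    using G xy unfolding graph_def by (auto simp: doubleton_eq_iff)
  ultimately have "{a, x} \<notin> E" and "{b, x} \<notin> E"
    using component_minus_closed[OF F] \<open>a \<in> F\<close> \<open>b \<in> F\<close> by blast+
  then have "associated_edges E {a, b} {x, y} \<subseteq> {{a, y}, {b, y}}"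
    using associated_edges_subset[OF G] by blast
  then have "{a, y} \<inter> {b, y} = {}"
    using type_2A_associated_edges_pair_disjoint[OF D ab xy cr] by blast
  then show False
    by blast
qed

theorem proposition1:
  fixes V :: "'v set" and E :: "'v set set" and pos :: "'v \<Rightarrow> complex"
    and \<Gamma> :: "'v set \<Rightarrow> real \<Rightarrow> complex" and S F :: "'v set" and a b x y :: 'v
  assumes "graph V E"
    and "type_2A V E pos \<Gamma>"
    and "vertex_cut V E S"
    and "component_minus V E S F"
    and "a \<in> F" and "b \<in> F" and "{a, b} \<in> E"
    and "{x, y} \<in> E"
    and "crosses \<Gamma> {a, b} {x, y}"
  shows "(x \<in> S \<and> y \<in> S) \<or> (x \<in> F \<and> y \<in> F) \<or>
         (x \<in> S \<and> y \<in> F) \<or> (x \<in> F \<and> y \<in> S)"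
proof -
  have "x \<in> S \<or> x \<in> F"
    using crossing_edge_end_in_cut_or_component assms(1,2,4-9) .
  moreover have "y \<in> S \<or> y \<in> F"
    using crossing_edge_end_in_cut_or_component[of V E pos \<Gamma> S F a b y x] assms(1,2,4-9)
    by (simp add: insert_commute)
  ultimately show ?thesis
    by blast
qed

end
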